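(* Let $n\geq 2$. For $f:[0,1]\to\mathbb{R}$ and $x\in[0,1]$ define $$R_n(f,x)=\sum_{k=0}^{n} f\left(\frac{k}{n}\right)\binom{n}{k}\frac{x^{(k,c(x))}\,(1-x)^{(n-k,c(x))}}{1^{(n,c(x))}},\qquad c(x)=-\frac{\min\{x,1-x\}}{n-1}.$$ If $f:[0,1]\to\mathbb{R}$ is monotone increasing (respectively decreasing), then $R_n(f,\cdot):[0,1]\to\mathbb{R}$ is also monotone increasing (respectively decreasing).
   Context: For real $z$ and $h$, the rising factorial with increment $h$ is $z^{(0,h)}=1$ and $z^{(m,h)}=z(z+h)\cdots(z+(m-1)h)$ for integers $m\geq 1$. Equivalently, $R_n(f,x)=E\,f\left(\frac1n X\right)$, where $X$ is the number of white balls in $n$ draws from a Pólya urn initially containing $x$ white and $1-x$ black balls with replacement parameter $c(x)$. *)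

theory Defs
  imports "HOL-Analysis.Analysis"
begin

definition rising_fact_h :: "real \<Rightarrow> nat \<Rightarrow> real \<Rightarrow> real" where
  "rising_fact_h z m h = (\<Prod>i<m. z + real i * h)"

definition c_par :: "nat \<Rightarrow> real \<Rightarrow> real" where
  "c_par n x = - min x (1 - x) / (real n - 1)"

definition R_op :: "nat \<Rightarrow> (real \<Rightarrow> real) \<Rightarrow> real \<Rightarrow> real" where
  "R_op n f x = (\<Sum>k=0..n. f (real k / real n) * real (n choose k) *
      (rising_fact_h x k (c_par n x) * rising_fact_h (1 - x) (n - k) (c_par n x))
      / rising_fact_h 1 n (c_par n x))"

end

theory Submission
  imports Defs
begin

text \<open>
  The weights \<open>w_k(x)\<close> of \<open>R_n(f, x) = \<Sum>_k f(k/n) w_k(x)\<close> form a probability distribution on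
  \<open>{0..n}\<close> by the Vandermonde identity for rising factorials. For \<open>x \<le> 1/2\<close> we have
  \<open>c(x) = -x/(n-1)\<close>, and up to factors depending only on \<open>k\<close> or only on \<open>x\<close>, \<open>w_k(x)\<close> equals
  \<open>x^k \<Prod>_{i<n-k} (1 - x (1 + i/(n-1)))\<close>. This kernel is totally positive of order two in
  \<open>(x, k)\<close>: the family has monotone likelihood ratio, so the mean of an increasing function
  of \<open>k\<close> increases with \<open>x\<close> on \<open>[0, 1/2]\<close>. The symmetry \<open>R_n(f, x) = R_n(f(1 - \<cdot>), 1 - x)\<close>
  transfers this to \<open>[1/2, 1]\<close>, and the decreasing case follows by passing to \<open>-f\<close>.
\<close>

lemma rising_fact_h_eq_pochhammer:
  assumes "h \<noteq> 0"
  shows "rising_fact_h z m h = h ^ m * pochhammer (z / h) m"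
proof -
  have "rising_fact_h z m h = (\<Prod>i<m. h * (z / h + real i))"
    unfolding rising_fact_h_def using assms by (intro prod.cong) (auto simp: field_simps)
  then show ?thesis
    by (simp add: prod.distrib pochhammer_prod lessThan_atLeast0)
qed

lemma rising_fact_h_vandermonde:
  "(\<Sum>k=0..n. real (n choose k) * (rising_fact_h a k h * rising_fact_h b (n - k) h))
     = rising_fact_h (a + b) n h"
proof (cases "h = 0")
  case True
  then have "rising_fact_h z m h = z ^ m" for z m
    unfolding rising_fact_h_def by simp
  then show ?thesis
    by (simp add: binomial_ring[of a b n] atLeast0AtMost mult_ac)
next
  case False
  have "rising_fact_h (a + b) n h
      = (\<Sum>k\<le>n. of_nat (n choose k) * (h ^ n * pochhammer (a/h) k * pochhammer (b/h) (n - k)))"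
    using False by (simp add: rising_fact_h_eq_pochhammer add_divide_distrib
        pochhammer_binomial_sum sum_distrib_left mult_ac)
  also have "\<dots> = (\<Sum>k=0..n. real (n choose k) *
      (h ^ k * pochhammer (a/h) k * (h ^ (n - k) * pochhammer (b/h) (n - k))))"
    by (intro sum.cong) (auto simp: atLeast0AtMost mult_ac simp flip: power_add)
  finally show ?thesis
    using False by (simp add: rising_fact_h_eq_pochhammer)
qed

text \<open>
  The proof rests on the identity \<open>\<Sum>_{j,k} (g k - g j)(q k p j - q j p k) = 2 (\<Sum> g q - \<Sum> g p)\<close>,
  whose summands are all nonnegative.
\<close>
lemma sum_mono_likelihood_ratio:
  fixes p q g :: "nat \<Rightarrow> real"
  assumes g: "\<And>j k. j \<le> k \<Longrightarrow> k \<le> n \<Longrightarrow> g j \<le> g k"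
    and ratio: "\<And>j k. j \<le> k \<Longrightarrow> k \<le> n \<Longrightarrow> p k * q j \<le> q k * p j"
    and sum_p: "sum p {0..n} = 1" and sum_q: "sum q {0..n} = 1"
  shows "(\<Sum>k=0..n. g k * p k) \<le> (\<Sum>k=0..n. g k * q k)"
proof -
  let ?A = "{0..n}"
  have "(g k - g j) * (q k * p j - q j * p k) \<ge> 0" if "j \<in> ?A" "k \<in> ?A" for j k
  proof (cases "j \<le> k")
    case True
    then show ?thesis using g[OF True] ratio[OF True] that by (simp add: mult_ac)
  next
    case False
    then have "k \<le> j" by simp
    then show ?thesis using g[OF \<open>k \<le> j\<close>] ratio[OF \<open>k \<le> j\<close>] that
      by (auto intro!: mult_nonpos_nonpos simp: mult_ac)
  qed
  then have "0 \<le> (\<Sum>j\<in>?A. \<Sum>k\<in>?A. (g k - g j) * (q k * p j - q j * p k))"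
    by (intro sum_nonneg) auto
  also have "\<dots> = (\<Sum>j\<in>?A. \<Sum>k\<in>?A. (g k * q k) * p j) - (\<Sum>j\<in>?A. \<Sum>k\<in>?A. (g k * p k) * q j)
      - (\<Sum>j\<in>?A. \<Sum>k\<in>?A. (g j * p j) * q k) + (\<Sum>j\<in>?A. \<Sum>k\<in>?A. (g j * q j) * p k)"
    by (simp add: algebra_simps sum.distrib sum_subtractf)
  also have "\<dots> = 2 * ((\<Sum>k\<in>?A. g k * q k) - (\<Sum>k\<in>?A. g k * p k))"
    by (simp add: sum_distrib_left[symmetric] sum_distrib_right[symmetric] sum_p sum_q)
  finally show ?thesis by simp
qed

text \<open>
  Padding \<open>\<Prod>_{i<n-k} g i z\<close> with \<open>k\<close> factors \<open>z\<close> makes both sides products over \<open>i < n\<close>,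
  which can then be compared factorwise.
\<close>
lemma power_prod_exchange_le:
  fixes g :: "nat \<Rightarrow> real \<Rightarrow> real"
  assumes jk: "j \<le> k" "k \<le> n" and xy: "0 \<le> x" "0 \<le> y"
    and g_nonneg: "\<And>i. i < n \<Longrightarrow> 0 \<le> g i x" "\<And>i. i < n \<Longrightarrow> 0 \<le> g i y"
    and exchange: "\<And>i. i < n \<Longrightarrow> x * g i y \<le> y * g i x"
  shows "x ^ k * (\<Prod>i<n-k. g i x) * (y ^ j * (\<Prod>i<n-j. g i y))
      \<le> y ^ k * (\<Prod>i<n-k. g i y) * (x ^ j * (\<Prod>i<n-j. g i x))"
proof -
  define pad where "pad z m i = (if i < n - m then g i z else z)" for z m i
  have pad_prod: "(\<Prod>i<n. pad z m i) = z ^ m * (\<Prod>i<n-m. g i z)" if "m \<le> n" for z m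
  proof -
    have "(\<Prod>i<n. pad z m i) = (\<Prod>i\<in>{0..<n-m}. pad z m i) * (\<Prod>i\<in>{n-m..<n}. pad z m i)"
      unfolding lessThan_atLeast0 by (rule prod.atLeastLessThan_concat[symmetric]) auto
    also have "\<dots> = (\<Prod>i<n-m. g i z) * z ^ m"
      using that by (simp add: pad_def lessThan_atLeast0)
    finally show ?thesis by simp
  qed
  have "(\<Prod>i<n. pad x k i * pad y j i) \<le> (\<Prod>i<n. pad y k i * pad x j i)"
  proof (intro prod_mono conjI)
    fix i assume "i \<in> {..<n}"
    then show "0 \<le> pad x k i * pad y j i" "pad x k i * pad y j i \<le> pad y k i * pad x j i"
      using jk xy g_nonneg exchange[of i] by (auto simp: pad_def mult_ac)
  qed
  then show ?thesis
    using jk by (simp add: prod.distrib pad_prod)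
qed

definition urn_weight :: "nat \<Rightarrow> real \<Rightarrow> nat \<Rightarrow> real" where
  "urn_weight n x k = real (n choose k) *
      (rising_fact_h x k (c_par n x) * rising_fact_h (1 - x) (n - k) (c_par n x))
      / rising_fact_h 1 n (c_par n x)"

lemma R_op_eq_sum_urn_weight: "R_op n f x = (\<Sum>k=0..n. f (real k / real n) * urn_weight n x k)"
  unfolding R_op_def urn_weight_def by (simp add: mult.assoc)

lemma R_op_uminus: "R_op n (\<lambda>t. - f t) x = - R_op n f x"
  unfolding R_op_def by (simp add: sum_negf)

lemma R_op_reflect:
  assumes "n \<ge> 1"
  shows "R_op n f x = R_op n (\<lambda>t. f (1 - t)) (1 - x)"
proof -
  have c: "c_par n (1 - x) = c_par n x"
    unfolding c_par_def by (simp add: min.commute)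
  have "1 - real (n - k) / real n = real k / real n" if "k \<le> n" for k
    using assms that by (simp add: of_nat_diff field_simps)
  then have "R_op n (\<lambda>t. f (1 - t)) (1 - x) = (\<Sum>k=0..n. f (real k / real n) *
      real (n choose k) * (rising_fact_h (1 - x) (n - k) (c_par n x) * rising_fact_h x k (c_par n x))
      / rising_fact_h 1 n (c_par n x))"
    unfolding R_op_def c
    by (subst sum.atLeastAtMost_rev) (auto intro!: sum.cong simp flip: binomial_symmetric)
  then show ?thesis
    unfolding R_op_def by (simp add: mult_ac)
qed

lemma rising_fact_h_one_c_par_pos:
  assumes "n \<ge> 2" "0 \<le> x" "x \<le> 1"
  shows "0 < rising_fact_h 1 n (c_par n x)"
  unfolding rising_fact_h_def
proof (rule prod_pos)
  fix i assume "i \<in> {..<n}"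
  then have "real i / (real n - 1) \<le> 1"
    using assms by (simp add: of_nat_diff)
  moreover have "min x (1 - x) \<le> 1/2"
    by (simp add: min_def)
  ultimately have "real i / (real n - 1) * min x (1 - x) \<le> 1 * (1/2)"
    using assms by (intro mult_mono) auto
  moreover have "real i * c_par n x = - (real i / (real n - 1) * min x (1 - x))"
    unfolding c_par_def by simp
  ultimately show "0 < 1 + real i * c_par n x"
    by linarith
qed

lemma sum_urn_weight:
  assumes "n \<ge> 2" "0 \<le> x" "x \<le> 1"
  shows "(\<Sum>k=0..n. urn_weight n x k) = 1"
  using rising_fact_h_one_c_par_pos[OF assms]
  by (simp add: urn_weight_def rising_fact_h_vandermonde flip: sum_divide_distrib)

lemma rising_fact_h_c_par_lower_left:
  assumes "x \<le> 1/2"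
  shows "rising_fact_h x k (c_par n x) = x ^ k * (\<Prod>i<k. 1 - real i / (real n - 1))"
proof -
  have "rising_fact_h x k (c_par n x) = (\<Prod>i<k. x * (1 - real i / (real n - 1)))"
    using assms unfolding rising_fact_h_def c_par_def by (simp add: min_def algebra_simps)
  then show ?thesis by (simp add: prod.distrib)
qed

lemma rising_fact_h_c_par_lower_right:
  assumes "x \<le> 1/2"
  shows "rising_fact_h (1 - x) m (c_par n x) = (\<Prod>i<m. 1 - x * (1 + real i / (real n - 1)))"
  using assms unfolding rising_fact_h_def c_par_def by (simp add: min_def algebra_simps)

lemma urn_weight_exchange_le:
  assumes n: "n \<ge> 2" and xy: "0 \<le> x" "x \<le> y" "y \<le> 1/2" and jk: "j \<le> k" "k \<le> n"
  shows "urn_weight n x k * urn_weight n y j \<le> urn_weight n y k * urn_weight n x j"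
proof -
  define a where "a i = real (n choose i) * (\<Prod>l<i. 1 - real l / (real n - 1))" for i
  define G where "G z m = (\<Prod>i<m. 1 - z * (1 + real i / (real n - 1)))" for z m
  define D where "D z = rising_fact_h 1 n (c_par n z)" for z
  have weight: "urn_weight n z i = a i * (z ^ i * G z (n - i)) / D z" if "z \<le> 1/2" for z i
    using that unfolding urn_weight_def a_def G_def D_def
    by (simp add: rising_fact_h_c_par_lower_left rising_fact_h_c_par_lower_right mult_ac)
  have "0 \<le> a i" if "i \<le> n" for i
    using that n unfolding a_def by (auto intro!: mult_nonneg_nonneg prod_nonneg)
  moreover have "0 < D x" "0 < D y"
    using xy n by (auto simp: D_def intro!: rising_fact_h_one_c_par_pos)
  ultimately have K: "0 \<le> a k * a j / (D x * D y)"
    using jk by auto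
  have factor: "0 \<le> 1 - z * (1 + real i / (real n - 1))" if "0 \<le> z" "z \<le> 1/2" "i < n" for z i
  proof -
    have "real i / (real n - 1) \<le> 1"
      using that n by (simp add: of_nat_diff)
    then have "z * (1 + real i / (real n - 1)) \<le> 1/2 * 2"
      using that by (intro mult_mono) auto
    then show ?thesis by simp
  qed
  have "x * (1 - y * t) \<le> y * (1 - x * t)" for t
    using xy by (simp add: algebra_simps)
  then have "x ^ k * G x (n - k) * (y ^ j * G y (n - j)) \<le> y ^ k * G y (n - k) * (x ^ j * G x (n - j))"
    unfolding G_def using jk xy factor
    by (intro power_prod_exchange_le) auto
  from mult_left_mono[OF this K] show ?thesis
    using xy by (simp add: weight mult_ac)
qed

lemma R_op_mono_lower_half:
  assumes n: "n \<ge> 2" and f: "mono_on {0..1} f" and xy: "0 \<le> x" "x \<le> y" "y \<le> 1/2"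
  shows "R_op n f x \<le> R_op n f y"
  unfolding R_op_eq_sum_urn_weight
proof (rule sum_mono_likelihood_ratio)
  fix j k assume jk: "j \<le> k" "k \<le> n"
  then show "f (real j / real n) \<le> f (real k / real n)"
    using n by (intro monotone_onD[OF f]) (auto simp: divide_right_mono)
  show "urn_weight n x k * urn_weight n y j \<le> urn_weight n y k * urn_weight n x j"
    using n xy jk by (rule urn_weight_exchange_le)
qed (use n xy in \<open>simp_all add: sum_urn_weight\<close>)

lemma R_op_mono_upper_half:
  assumes n: "n \<ge> 2" and f: "mono_on {0..1} f" and xy: "1/2 \<le> x" "x \<le> y" "y \<le> 1"
  shows "R_op n f x \<le> R_op n f y"
proof -
  have "mono_on {0..1} (\<lambda>t. - f (1 - t))"
    by (intro monotone_onI) (auto intro!: monotone_onD[OF f])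
  then have "R_op n (\<lambda>t. - f (1 - t)) (1 - y) \<le> R_op n (\<lambda>t. - f (1 - t)) (1 - x)"
    using n xy by (intro R_op_mono_lower_half) auto
  then show ?thesis
    using n by (simp add: R_op_uminus R_op_reflect[of n f])
qed

lemma R_op_mono:
  assumes n: "n \<ge> 2" and f: "mono_on {0..1} f"
  shows "mono_on {0..1} (R_op n f)"
proof (rule monotone_onI)
  fix x y :: real assume "x \<in> {0..1}" "y \<in> {0..1}" "x \<le> y"
  then consider "y \<le> 1/2" | "1/2 \<le> x" | "x \<le> 1/2" "1/2 \<le> y"
    by force
  then show "R_op n f x \<le> R_op n f y"
  proof cases
    case 3
    then have "R_op n f x \<le> R_op n f (1/2)"
      using \<open>x \<in> {0..1}\<close> by (intro R_op_mono_lower_half[OF n f]) auto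
    also have "\<dots> \<le> R_op n f y"
      using 3 \<open>y \<in> {0..1}\<close> by (intro R_op_mono_upper_half[OF n f]) auto
    finally show ?thesis .
  qed (use \<open>x \<in> {0..1}\<close> \<open>y \<in> {0..1}\<close> \<open>x \<le> y\<close>
       in \<open>auto intro: R_op_mono_lower_half[OF n f] R_op_mono_upper_half[OF n f]\<close>)
qed

theorem theorem3p3:
  fixes n :: nat and f :: "real \<Rightarrow> real"
  assumes "n \<ge> 2"
  shows "(mono_on {0..1} f \<longrightarrow> mono_on {0..1} (R_op n f)) \<and>
         (antimono_on {0..1} f \<longrightarrow> antimono_on {0..1} (R_op n f))"
proof (intro conjI impI)
  assume "mono_on {0..1} f"
  then show "mono_on {0..1} (R_op n f)"
    using assms by (rule R_op_mono[rotated])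
next
  assume f: "antimono_on {0..1} f"
  have "mono_on {0..1} (\<lambda>t. - f t)"
    by (intro monotone_onI) (auto intro: monotone_onD[OF f])
  then have "mono_on {0..1} (R_op n (\<lambda>t. - f t))"
    using assms by (rule R_op_mono[rotated])
  then show "antimono_on {0..1} (R_op n f)"
    by (auto intro!: monotone_onI dest: monotone_onD simp: R_op_uminus)
qed

end
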